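(* Let $\mathbb G$ be a Métivier group as in the context and let $g=(x,t)$ with $x\neq0$. Then $\phi(g;\cdot)$ is strongly concave on $\Omega_*$, i.e. there is $C>0$ such that $\phi(g;s a+(1-s)b)\ge s\phi(g;a)+(1-s)\phi(g;b)+Cs(1-s)|a-b|^2$ for all $0\le s\le1$ and $a,b\in\Omega_*$.
   Context: Let $q,m\ge1$, $U^{(1)},\dots,U^{(m)}$ linearly independent real skew-symmetric $q\times q$ matrices, $U(\tau)=i\sum_j\tau_jU^{(j)}$; the group is of Métivier type if $U(\lambda)$ is invertible for every $\lambda\in\mathbb R^m\setminus\{0\}$. $\Omega_*=\{\tau\in\mathbb R^m:\|U(\tau)\|<\pi\}$, $\phi((x,t);\tau)=\langle U(\tau)\cot U(\tau)x,x\rangle+4t\cdot\tau$ for $(x,t)\in\mathbb R^q\times\mathbb R^m$, $\tau\in\Omega_*$. *)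

theory Defs
  imports "HOL-Analysis.Analysis" "HOL-Computational_Algebra.Formal_Power_Series"
begin

text \<open>Taylor series of z cot z = cos z / (sin z / z) as a formal power series
  (radius of convergence pi).\<close>
definition xcotx_fps :: "real fps" where
  "xcotx_fps = fps_cos 1 * inverse (fps_shift 1 (fps_sin 1))"

primrec mat_pow :: "complex^'n^'n \<Rightarrow> nat \<Rightarrow> complex^'n^'n" where
  "mat_pow M 0 = mat 1"
| "mat_pow M (Suc k) = M ** mat_pow M k"

text \<open>Matrix function M cot M via its power series (converges for operator norm < pi).\<close>
definition mat_xcotx :: "complex^'n^'n \<Rightarrow> complex^'n^'n" where
  "mat_xcotx M = (\<Sum>k. fps_nth xcotx_fps k *\<^sub>R mat_pow M k)"

definition Umat :: "('m::finite \<Rightarrow> real^'q^'q) \<Rightarrow> real^'m \<Rightarrow> complex^'q^'q" where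
  "Umat Us \<tau> = (\<chi> i k. \<i> * complex_of_real (\<Sum>j\<in>UNIV. \<tau>$j * (Us j $ i $ k)))"

definition metivier :: "('m::finite \<Rightarrow> real^'q^'q) \<Rightarrow> bool" where
  "metivier Us \<longleftrightarrow> (\<forall>l::real^'m. l \<noteq> 0 \<longrightarrow> invertible (Umat Us l))"

definition Omega_star :: "('m::finite \<Rightarrow> real^'q^'q) \<Rightarrow> (real^'m) set" where
  "Omega_star Us = {\<tau>. onorm (\<lambda>v. Umat Us \<tau> *v v) < pi}"

text \<open>phi((x,t);tau) = <U cot U x, x> + 4 t.tau  (the bracket is real; we take Re).\<close>
definition phi :: "('m::finite \<Rightarrow> real^'q^'q) \<Rightarrow> real^'q \<Rightarrow> real^'m \<Rightarrow> real^'m \<Rightarrow> real" where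
  "phi Us x t \<tau> = Re (\<Sum>i\<in>UNIV. \<Sum>k\<in>UNIV.
      mat_xcotx (Umat Us \<tau>) $ i $ k * complex_of_real (x$k) * complex_of_real (x$i))
    + 4 * (t \<bullet> \<tau>)"

end

theory Submission
  imports Defs
begin

text \<open>
  For |u| < pi the partial fraction expansion u cot u = 1 - sum_n 2u^2 / (c_n^2 - u^2),
  c_n = (n + 1) pi, together with 2u^2 / (c^2 - u^2) = c/(c - u) + c/(c + u) - 2, expresses
  <U cot U x, x> as |x|^2 minus a series of resolvent forms c_n <(c_n -+ U)^-1 x, x>.
  Here U = U(tau) is self-adjoint, since the U^(j) are real skew-symmetric, and has norm
  below pi on Omega_*. For self-adjoint A of norm below c the form A |-> <(c - A)^-1 x, x>
  is convex along segments, with defect at least s (1 - s) |(A_a - A_b) y|^2 / (2 c) for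
  y = (c - A_s)^-1 x. As tau |-> U(tau) is linear, phi(g; .) is concave on Omega_*, and the
  pole c_0 = pi alone gives the quadratic gain: the Metivier condition yields
  |U(a - b) y| >= sigma |a - b| |y|, while |y| >= |x| / (2 pi).
\<close>

section \<open>Partial fractions of the cotangent\<close>

lemma Digamma_reflection_real:
  fixes w :: real
  assumes "w \<notin> \<int>"
  shows "sin (pi * w) * (Digamma (1 - w) - Digamma w) = pi * cos (pi * w)"
proof -
  have w: "w \<notin> \<int>\<^sub>\<le>\<^sub>0" using assms nonpos_Ints_subset_Ints by blast
  have w': "1 - w \<notin> \<int>\<^sub>\<le>\<^sub>0"
    using assms nonpos_Ints_subset_Ints Ints_diff[OF Ints_1, of "1 - w"] by auto
  have reflection: "rGamma z * rGamma (1 - z) = sin (pi * z) / pi" for z :: real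
  proof -
    have "complex_of_real (rGamma z * rGamma (1 - z)) = of_real (sin (pi * z) / pi)"
      using rGamma_reflection_complex[of "of_real z"]
      by (simp flip: rGamma_complex_of_real sin_of_real)
    then show ?thesis by (simp only: of_real_eq_iff)
  qed
  have "((\<lambda>z. rGamma z * rGamma (1 - z)) has_field_derivative
      rGamma w * rGamma (1 - w) * (Digamma (1 - w) - Digamma w)) (at w)"
    by (rule derivative_eq_intros has_field_derivative_rGamma_no_nonpos_int w w' reflection
        | simp add: algebra_simps)+
  moreover have "((\<lambda>z. rGamma z * rGamma (1 - z)) has_field_derivative cos (pi * w)) (at w)"
    unfolding reflection by (auto intro!: derivative_eq_intros)
  ultimately have "rGamma w * rGamma (1 - w) * (Digamma (1 - w) - Digamma w) = cos (pi * w)"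
    by (rule DERIV_unique)
  then show ?thesis by (simp add: reflection field_simps)
qed

definition cot_pole :: "nat \<Rightarrow> real" where
  "cot_pole n = real (Suc n) * pi"

lemma cot_pole_ge_pi: "pi \<le> cot_pole n"
  using pi_gt_zero by (simp add: cot_pole_def)

lemma cot_pole_pos: "0 < cot_pole n"
  using cot_pole_ge_pi[of n] pi_gt_zero by linarith

lemma sums_cot_partial_fractions:
  fixes u :: real
  assumes "0 < \<bar>u\<bar>" "\<bar>u\<bar> < pi"
  shows "(\<lambda>n. 2 * u\<^sup>2 / ((cot_pole n)\<^sup>2 - u\<^sup>2)) sums (1 - u * cot u)"
proof -
  define w where "w = u / pi"
  have w: "0 < \<bar>w\<bar>" "\<bar>w\<bar> < 1"
    using assms pi_gt_zero by (auto simp: w_def field_simps)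
  have u: "u = pi * w" by (simp add: w_def)
  have "w \<notin> \<int>" using w Ints_nonzero_abs_less1 by fastforce
  then have "sin u \<noteq> 0" and "sin u * (Digamma (1 - w) - Digamma w) = pi * cos u"
    using Digamma_reflection_real[of w] sin_times_pi_eq_0[of w] by (simp_all add: u mult.commute)
  moreover have "Digamma (1 - w) - Digamma w = 1 / w + (Digamma (1 - w) - Digamma (1 + w))"
    using Digamma_plus1[of w] w by (simp add: add.commute)
  ultimately have ucot: "1 - u * cot u = - w * (Digamma (1 - w) - Digamma (1 + w))"
    using w by (simp add: cot_def u field_simps)
  have "(\<lambda>k. inverse (1 + w + of_nat k) - inverse (1 - w + of_nat k))
      sums (Digamma (1 - w) - Digamma (1 + w))"
    using sums_diff[OF summable_sums[OF summable_Digamma[of "1 - w"]]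
                       summable_sums[OF summable_Digamma[of "1 + w"]]] w
    by (simp add: Digamma_def)
  from sums_mult[OF this, of "- w"]
  have "(\<lambda>k. - w * (inverse (1 + w + of_nat k) - inverse (1 - w + of_nat k))) sums (1 - u * cot u)"
    by (simp only: ucot)
  moreover have "- w * (inverse (1 + w + of_nat k) - inverse (1 - w + of_nat k))
      = 2 * u\<^sup>2 / ((cot_pole k)\<^sup>2 - u\<^sup>2)" for k
  proof -
    define p where "p = (1 + w + of_nat k) * (1 - w + of_nat k)"
    have "1 + w + of_nat k > 0" "1 - w + of_nat k > 0" using w by auto
    then have "- w * (inverse (1 + w + of_nat k) - inverse (1 - w + of_nat k)) = 2 * w\<^sup>2 / p"
      by (simp add: p_def field_simps power2_eq_square)
    also have "\<dots> = (pi\<^sup>2 * (2 * w\<^sup>2)) / (pi\<^sup>2 * p)"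
      using pi_gt_zero by simp
    also have "\<dots> = 2 * u\<^sup>2 / ((cot_pole k)\<^sup>2 - u\<^sup>2)"
      by (simp add: p_def cot_pole_def u power2_eq_square algebra_simps)
    finally show ?thesis .
  qed
  ultimately show ?thesis by simp
qed

lemma sums_even_powers:
  fixes u c :: real
  assumes "\<bar>u\<bar> < c"
  shows "(\<lambda>k. (1 + (-1) ^ k) * (u / c) ^ k - (if k = 0 then 2 else 0))
    sums (2 * u\<^sup>2 / (c\<^sup>2 - u\<^sup>2))"
proof -
  define \<rho> where "\<rho> = u / c"
  have \<rho>: "\<bar>\<rho>\<bar> < 1" using assms by (simp add: \<rho>_def)
  have "(\<lambda>k. \<rho> ^ k + (- \<rho>) ^ k - (if k = 0 then 2 else 0))
      sums (1 / (1 - \<rho>) + 1 / (1 - (- \<rho>)) - 2)"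
    using \<rho> by (intro sums_diff sums_add geometric_sums sums_single[of 0 "\<lambda>_. 2::real", simplified])
      auto
  moreover have "\<rho> ^ k + (- \<rho>) ^ k = (1 + (-1) ^ k) * \<rho> ^ k" for k
    by (simp add: power_minus[of \<rho>] algebra_simps)
  moreover have "1 / (1 - \<rho>) + 1 / (1 - (- \<rho>)) - 2 = 2 * u\<^sup>2 / (c\<^sup>2 - u\<^sup>2)"
  proof -
    have "1 - \<rho> \<noteq> 0" "1 + \<rho> \<noteq> 0" "1 - \<rho>\<^sup>2 \<noteq> 0" "c \<noteq> 0"
      using \<rho> assms abs_square_less_1[of \<rho>] by auto
    then show ?thesis by (simp add: \<rho>_def field_simps power2_eq_square)
  qed
  ultimately show ?thesis by (simp add: \<rho>_def)
qed

lemma summable_pole_powers: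
  assumes "1 \<le> k"
  shows "summable (\<lambda>n. (1 + (-1) ^ k) / cot_pole n ^ k)"
proof (cases "even k")
  case True
  with assms have "2 \<le> k" by presburger
  then have "summable (\<lambda>n. inverse (real n ^ k))"
    by (rule inverse_power_summable)
  then have "summable (\<lambda>n. inverse (real (Suc n) ^ k))"
    using summable_Suc_iff[of "\<lambda>n. inverse (real n ^ k)"] by simp
  from summable_mult[OF this, of "(1 + (-1) ^ k) / pi ^ k"] show ?thesis
    by (simp add: cot_pole_def power_mult_distrib divide_inverse mult_ac)
qed simp

section \<open>Uniqueness of power series expansions\<close>

lemma fps_nth_conv_deriv_field:
  fixes f :: "'a::{banach, real_normed_field} fps"
  assumes "fps_conv_radius f > 0"
  shows "fps_nth f n = (deriv ^^ n) (eval_fps f) 0 / fact n"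
  using assms
proof (induction n arbitrary: f)
  case 0
  then show ?case by (simp add: eval_fps_def)
next
  case (Suc n f)
  have "eventually (\<lambda>z. z \<in> eball 0 (fps_conv_radius f)) (nhds (0::'a))"
    using Suc.prems by (intro eventually_nhds_in_open) (auto simp: zero_ereal_def)
  then have "eventually (\<lambda>z. deriv (eval_fps f) z = eval_fps (fps_deriv f) z) (nhds 0)"
    by eventually_elim (simp add: eval_fps_deriv)
  then have "(deriv ^^ Suc n) (eval_fps f) 0 = (deriv ^^ n) (eval_fps (fps_deriv f)) 0"
    unfolding funpow_Suc_right o_def by (intro higher_deriv_cong_ev refl)
  also have "\<dots> = fps_nth (fps_deriv f) n * fact n"
    using Suc.prems fps_conv_radius_deriv[of f] Suc.IH[of "fps_deriv f"] by simp
  finally show ?case by (simp add: fps_deriv_def field_simps del: of_nat_Suc)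
qed

lemma has_fps_expansion_unique:
  fixes F G :: "'a::{banach, real_normed_field} fps"
  assumes "f has_fps_expansion F" "f has_fps_expansion G"
  shows "F = G"
proof (rule fps_ext)
  have "eventually (\<lambda>z. eval_fps F z = eval_fps G z) (nhds 0)"
    using assms by (auto simp: has_fps_expansion_def elim: eventually_elim2)
  then show "fps_nth F n = fps_nth G n" for n
    using assms by (simp add: fps_nth_conv_deriv_field has_fps_expansion_def higher_deriv_cong_ev)
qed

section \<open>Self-adjoint operators and the Neumann series of the resolvent\<close>

definition selfadjoint :: "('v::real_inner \<Rightarrow> 'v) \<Rightarrow> bool" where
  "selfadjoint A \<longleftrightarrow> (\<forall>v w. inner (A v) w = inner v (A w))"

lemma selfadjointD: "selfadjoint A \<Longrightarrow> inner (A v) w = inner v (A w)"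
  by (simp add: selfadjoint_def)

lemma selfadjoint_uminus: "selfadjoint A \<Longrightarrow> selfadjoint (\<lambda>v. - A v)"
  by (simp add: selfadjoint_def)

lemma selfadjoint_lincomb:
  assumes "selfadjoint A" "selfadjoint B"
  shows "selfadjoint (\<lambda>v. a *\<^sub>R A v + b *\<^sub>R B v)"
  using assms by (simp add: selfadjoint_def inner_add_left inner_add_right)

lemma selfadjoint_funpow_shift:
  assumes "selfadjoint A"
  shows "inner ((A ^^ (j + m)) v) w = inner ((A ^^ m) v) ((A ^^ j) w)"
proof (induction j arbitrary: w)
  case (Suc j)
  have "inner ((A ^^ (Suc j + m)) v) w = inner ((A ^^ (j + m)) v) (A w)"
    using selfadjointD[OF assms] by simp
  also have "\<dots> = inner ((A ^^ m) v) ((A ^^ Suc j) w)"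
    by (simp add: Suc.IH funpow_Suc_right del: funpow.simps)
  finally show ?case .
qed simp

lemma selfadjoint_even_power_nonneg:
  assumes "selfadjoint A"
  shows "0 \<le> (1 + (-1) ^ k) * inner ((A ^^ k) v) v"
proof (cases "even k")
  case True
  then obtain j where "k = j + j" by (metis evenE mult_2)
  then have "inner ((A ^^ k) v) v = inner ((A ^^ j) v) ((A ^^ j) v)"
    by (simp add: selfadjoint_funpow_shift[OF assms])
  then show ?thesis using True by simp
qed simp

lemma funpow_uminus:
  fixes A :: "'v::real_vector \<Rightarrow> 'v"
  assumes "linear A"
  shows "((\<lambda>v. - A v) ^^ k) v = (-1) ^ k *\<^sub>R (A ^^ k) v"
proof (induction k)
  case (Suc k)
  have "((\<lambda>v. - A v) ^^ Suc k) v = - A ((-1) ^ k *\<^sub>R (A ^^ k) v)"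
    by (simp add: Suc.IH)
  also have "\<dots> = (-1) ^ Suc k *\<^sub>R (A ^^ Suc k) v"
    by (simp add: linear_cmul[OF assms])
  finally show ?case .
qed simp

lemma norm_funpow_le:
  fixes A :: "'v::real_normed_vector \<Rightarrow> 'v"
  assumes "\<And>v. norm (A v) \<le> r * norm v" "0 \<le> r"
  shows "norm ((A ^^ k) v) \<le> r ^ k * norm v"
proof (induction k)
  case (Suc k)
  have "norm ((A ^^ Suc k) v) \<le> r * norm ((A ^^ k) v)" using assms(1) by simp
  also have "\<dots> \<le> r * (r ^ k * norm v)" using Suc assms(2) by (intro mult_left_mono)
  finally show ?case by simp
qed simp

lemma convex_comb_operator:
  fixes Aa Ab :: "'v::real_normed_vector \<Rightarrow> 'v"
  assumes "bounded_linear Aa" "bounded_linear Ab"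
    and "\<And>v. norm (Aa v) \<le> r * norm v" "\<And>v. norm (Ab v) \<le> r * norm v" "0 \<le> s" "s \<le> 1"
  shows "bounded_linear (\<lambda>v. s *\<^sub>R Aa v + (1 - s) *\<^sub>R Ab v)"
    and "norm (s *\<^sub>R Aa v + (1 - s) *\<^sub>R Ab v) \<le> r * norm v"
proof -
  show "bounded_linear (\<lambda>v. s *\<^sub>R Aa v + (1 - s) *\<^sub>R Ab v)"
    using assms(1,2) by (intro bounded_linear_add bounded_linear_const_scaleR)
  have "norm (s *\<^sub>R Aa v + (1 - s) *\<^sub>R Ab v) \<le> s * norm (Aa v) + (1 - s) * norm (Ab v)"
    using norm_triangle_ineq[of "s *\<^sub>R Aa v" "(1 - s) *\<^sub>R Ab v"] assms(5,6) by simp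
  also have "\<dots> \<le> s * (r * norm v) + (1 - s) * (r * norm v)"
    using assms(3-6) by (intro add_mono mult_left_mono) auto
  finally show "norm (s *\<^sub>R Aa v + (1 - s) *\<^sub>R Ab v) \<le> r * norm v"
    by (simp add: algebra_simps)
qed

definition resolvent :: "('v::real_normed_vector \<Rightarrow> 'v) \<Rightarrow> real \<Rightarrow> 'v \<Rightarrow> 'v" where
  "resolvent A c x = (\<Sum>k. (inverse c ^ Suc k) *\<^sub>R (A ^^ k) x)"

context
  fixes A :: "'v::banach \<Rightarrow> 'v" and r c :: real
  assumes lin: "bounded_linear A" and bound: "\<And>v. norm (A v) \<le> r * norm v"
    and r: "0 \<le> r" "r < c"
begin

private lemma norm_resolvent_term_le:
  "norm ((inverse c ^ k) *\<^sub>R (A ^^ k) x) \<le> (r / c) ^ k * norm x"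
proof -
  have "norm ((inverse c ^ k) *\<^sub>R (A ^^ k) x) \<le> inverse c ^ k * (r ^ k * norm x)"
    using norm_funpow_le[OF bound r(1)] r by (simp add: mult_left_mono)
  then show ?thesis by (simp add: field_simps)
qed

lemma resolvent_sums: "(\<lambda>k. (inverse c ^ Suc k) *\<^sub>R (A ^^ k) x) sums resolvent A c x"
proof -
  have "summable (\<lambda>k. (inverse c ^ k) *\<^sub>R (A ^^ k) x)"
    by (rule summable_comparison_test'[OF summable_mult2[OF summable_geometric]])
       (use r norm_resolvent_term_le in auto)
  from summable_scaleR_right[OF this, of "inverse c"] show ?thesis
    unfolding resolvent_def by (intro summable_sums) (simp add: mult.commute)
qed

lemma resolvent_eq: "c *\<^sub>R resolvent A c x - A (resolvent A c x) = x"
proof -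
  define b where "b k = (inverse c ^ k) *\<^sub>R (A ^^ k) x" for k
  have c: "c * (inverse c * y) = y" for y using r by (simp add: mult.assoc[symmetric])
  have "b sums (c *\<^sub>R resolvent A c x)"
    unfolding b_def[abs_def] using sums_scaleR_right[OF resolvent_sums, of c] by (simp add: c)
  moreover have "(\<lambda>k. b (Suc k)) sums A (resolvent A c x)"
    using bounded_linear.sums[OF lin resolvent_sums]
    by (simp add: b_def linear_cmul[OF bounded_linear.linear[OF lin]])
  ultimately have diff: "(\<lambda>k. b k - b (Suc k)) sums (c *\<^sub>R resolvent A c x - A (resolvent A c x))"
    by (rule sums_diff)
  have "b \<longlonglongrightarrow> 0"
  proof (rule Lim_null_comparison)
    show "eventually (\<lambda>k. norm (b k) \<le> (r / c) ^ k * norm x) sequentially"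
      using norm_resolvent_term_le by (simp add: b_def)
    show "(\<lambda>k. (r / c) ^ k * norm x) \<longlonglongrightarrow> 0"
      using r by (intro tendsto_mult_left_zero LIMSEQ_power_zero) auto
  qed
  then have "(\<lambda>k. b k - b (Suc k)) sums (b 0 - 0)" by (rule telescope_sums')
  from sums_unique2[OF diff this] show ?thesis by (simp add: b_def)
qed

end

lemma inner_resolvent_sums:
  fixes A :: "'v::{real_inner,banach} \<Rightarrow> 'v"
  assumes "bounded_linear A" "\<And>v. norm (A v) \<le> r * norm v" "0 \<le> r" "r < c"
  shows "(\<lambda>k. inverse c ^ Suc k * inner ((A ^^ k) x) w) sums inner (resolvent A c x) w"
  using bounded_linear.sums[OF bounded_linear_inner_left resolvent_sums[OF assms]]
  by (simp only: inner_scaleR_left)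

lemma norm_le_resolvent:
  fixes A :: "'v::banach \<Rightarrow> 'v"
  assumes "bounded_linear A" "\<And>v. norm (A v) \<le> r * norm v" "0 \<le> r" "r < c"
  shows "norm x \<le> (c + r) * norm (resolvent A c x)"
proof -
  let ?y = "resolvent A c x"
  have "norm x \<le> norm (c *\<^sub>R ?y) + norm (A ?y)"
    using norm_triangle_ineq4[of "c *\<^sub>R ?y" "A ?y"] by (simp only: resolvent_eq[OF assms])
  also have "\<dots> \<le> (c + r) * norm ?y"
    using assms(2)[of ?y] assms(3,4) by (simp add: algebra_simps)
  finally show ?thesis .
qed

lemma resolvent_scalar:
  fixes u c :: real
  assumes "\<bar>u\<bar> < c"
  shows "resolvent ((*) u) c 1 = 1 / (c - u)"
proof -
  have "c * resolvent ((*) u) c 1 - u * resolvent ((*) u) c 1 = 1"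
    using resolvent_eq[where x = 1, OF bounded_linear_mult_right[of u] _ abs_ge_zero assms]
    by (simp add: abs_mult)
  moreover have "c - u \<noteq> 0" using assms by auto
  ultimately show ?thesis by (simp add: field_simps)
qed

section \<open>Convexity of the resolvent form\<close>

lemma norm_sq_le_inner_shift:
  fixes A :: "'v::real_inner \<Rightarrow> 'v"
  assumes "norm (A d) \<le> c * norm d" "0 < c"
  shows "(norm (c *\<^sub>R d - A d))\<^sup>2 \<le> 2 * c * inner (c *\<^sub>R d - A d) d"
proof -
  have n: "(norm (c *\<^sub>R d - A d))\<^sup>2 = c\<^sup>2 * (norm d)\<^sup>2 - 2 * c * inner (A d) d + (norm (A d))\<^sup>2"
    unfolding power2_norm_eq_inner
    by (simp add: inner_commute power2_eq_square algebra_simps)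
  have i: "inner (c *\<^sub>R d - A d) d = c * (norm d)\<^sup>2 - inner (A d) d"
    by (simp add: power2_norm_eq_inner inner_diff_left)
  have "(norm (A d))\<^sup>2 \<le> (c * norm d)\<^sup>2" using assms by (intro power_mono) auto
  then show ?thesis unfolding n i by (simp add: power2_eq_square algebra_simps)
qed

lemma inner_shift_diff:
  fixes A :: "'v::real_inner \<Rightarrow> 'v"
  assumes "linear A" "selfadjoint A" "c *\<^sub>R z - A z = x"
  shows "inner (c *\<^sub>R (y - z) - A (y - z)) (y - z)
    = inner (c *\<^sub>R y - A y) y - 2 * inner y x + inner z x"
proof -
  have "inner (c *\<^sub>R y - A y) z = inner y (c *\<^sub>R z - A z)"
    using selfadjointD[OF assms(2), of y z] by (simp add: inner_diff_left inner_diff_right)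
  then show ?thesis
    using assms(3) by (simp add: linear_diff[OF assms(1)] inner_commute algebra_simps)
qed

lemma inverse_form_convexity_gap:
  fixes Aa Ab :: "'v::real_inner \<Rightarrow> 'v"
  assumes "linear Aa" "linear Ab" "selfadjoint Aa" "selfadjoint Ab"
    and "\<And>v. norm (Aa v) \<le> c * norm v" "\<And>v. norm (Ab v) \<le> c * norm v"
    and "0 < c" "0 \<le> s" "s \<le> 1"
    and ya: "c *\<^sub>R ya - Aa ya = x" and yb: "c *\<^sub>R yb - Ab yb = x"
    and y: "c *\<^sub>R y - (s *\<^sub>R Aa y + (1 - s) *\<^sub>R Ab y) = x"
  shows "s * (1 - s) * (norm (Aa y - Ab y))\<^sup>2
    \<le> 2 * c * (s * inner ya x + (1 - s) * inner yb x - inner y x)"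
proof -
  \<comment> \<open>With d_a = y - ya and d_b = y - yb, the defect is
    s <(c - Aa) d_a, d_a> + (1 - s) <(c - Ab) d_b, d_b>, and (c - Aa) d_a, (c - Ab) d_b
    are multiples of (Aa - Ab) y.\<close>
  define D where "D = Aa y - Ab y"
  define P where "P = inner (c *\<^sub>R (y - ya) - Aa (y - ya)) (y - ya)"
  define Q where "Q = inner (c *\<^sub>R (y - yb) - Ab (y - yb)) (y - yb)"
  have "c *\<^sub>R (y - ya) - Aa (y - ya) = (s - 1) *\<^sub>R D"
    using ya y by (simp add: D_def linear_diff[OF assms(1)] algebra_simps)
  then have P: "(1 - s)\<^sup>2 * (norm D)\<^sup>2 \<le> 2 * c * P"
    using norm_sq_le_inner_shift[where A = Aa and d = "y - ya", OF assms(5) assms(7)] assms(9)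
    by (simp add: P_def power_mult_distrib abs_minus_commute)
  have "c *\<^sub>R (y - yb) - Ab (y - yb) = s *\<^sub>R D"
    using yb y by (simp add: D_def linear_diff[OF assms(2)] algebra_simps)
  then have Q: "s\<^sup>2 * (norm D)\<^sup>2 \<le> 2 * c * Q"
    using norm_sq_le_inner_shift[where A = Ab and d = "y - yb", OF assms(6) assms(7)] assms(8)
    by (simp add: Q_def power_mult_distrib)
  have "s * inner (c *\<^sub>R y - Aa y) y + (1 - s) * inner (c *\<^sub>R y - Ab y) y
      = inner (c *\<^sub>R y - (s *\<^sub>R Aa y + (1 - s) *\<^sub>R Ab y)) y"
    by (simp add: algebra_simps)
  then have "s * inner (c *\<^sub>R y - Aa y) y + (1 - s) * inner (c *\<^sub>R y - Ab y) y = inner x y"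
    by (simp only: y)
  then have gap: "s * P + (1 - s) * Q = s * inner ya x + (1 - s) * inner yb x - inner y x"
    unfolding P_def Q_def inner_shift_diff[OF assms(1,3) ya] inner_shift_diff[OF assms(2,4) yb]
    by (simp add: inner_commute algebra_simps)
  have "s * (1 - s) * (norm D)\<^sup>2 = s * ((1 - s)\<^sup>2 * (norm D)\<^sup>2) + (1 - s) * (s\<^sup>2 * (norm D)\<^sup>2)"
    by (simp add: power2_eq_square algebra_simps)
  also have "\<dots> \<le> s * (2 * c * P) + (1 - s) * (2 * c * Q)"
    using P Q assms(8,9) by (intro add_mono mult_left_mono) auto
  finally show ?thesis
    unfolding D_def gap[symmetric] by (simp add: algebra_simps)
qed

lemma inner_resolvent_convexity_gap:
  fixes Aa Ab :: "'v::{real_inner,banach} \<Rightarrow> 'v"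
  assumes "bounded_linear Aa" "bounded_linear Ab" "selfadjoint Aa" "selfadjoint Ab"
    and "\<And>v. norm (Aa v) \<le> r * norm v" "\<And>v. norm (Ab v) \<le> r * norm v"
    and "0 \<le> r" "r < c" "0 \<le> s" "s \<le> 1"
    and y: "y = resolvent (\<lambda>v. s *\<^sub>R Aa v + (1 - s) *\<^sub>R Ab v) c x"
  shows "s * (1 - s) * (norm (Aa y - Ab y))\<^sup>2
    \<le> 2 * c * (s * inner (resolvent Aa c x) x + (1 - s) * inner (resolvent Ab c x) x - inner y x)"
proof (rule inverse_form_convexity_gap)
  note mix = convex_comb_operator[OF assms(1,2,5,6,9,10)]
  show "c *\<^sub>R y - (s *\<^sub>R Aa y + (1 - s) *\<^sub>R Ab y) = x"
    unfolding y by (rule resolvent_eq[OF mix assms(7,8)])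
  show "c *\<^sub>R resolvent Aa c x - Aa (resolvent Aa c x) = x"
    by (rule resolvent_eq[OF assms(1,5,7,8)])
  show "c *\<^sub>R resolvent Ab c x - Ab (resolvent Ab c x) = x"
    by (rule resolvent_eq[OF assms(2,6,7,8)])
  show "norm (Aa v) \<le> c * norm v" "norm (Ab v) \<le> c * norm v" for v
    using assms(5,6)[of v] assms(8) mult_right_mono[of r c "norm v"] by auto
qed (use assms in \<open>auto intro: bounded_linear.linear\<close>)

lemma inner_resolvent_convex:
  fixes Aa Ab :: "'v::{real_inner,banach} \<Rightarrow> 'v"
  assumes "bounded_linear Aa" "bounded_linear Ab" "selfadjoint Aa" "selfadjoint Ab"
    and "\<And>v. norm (Aa v) \<le> r * norm v" "\<And>v. norm (Ab v) \<le> r * norm v"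
    and "0 \<le> r" "r < c" "0 \<le> s" "s \<le> 1"
  shows "inner (resolvent (\<lambda>v. s *\<^sub>R Aa v + (1 - s) *\<^sub>R Ab v) c x) x
    \<le> s * inner (resolvent Aa c x) x + (1 - s) * inner (resolvent Ab c x) x"
proof -
  let ?y = "resolvent (\<lambda>v. s *\<^sub>R Aa v + (1 - s) *\<^sub>R Ab v) c x"
  have "0 \<le> s * (1 - s) * (norm (Aa ?y - Ab ?y))\<^sup>2" using assms(9,10) by simp
  also have "\<dots> \<le> 2 * c * (s * inner (resolvent Aa c x) x + (1 - s) * inner (resolvent Ab c x) x
      - inner ?y x)"
    by (rule inner_resolvent_convexity_gap[OF assms refl])
  finally show ?thesis using assms(7,8) by (simp add: zero_le_mult_iff)
qed

section \<open>The quadratic form of A cot A\<close>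

lemma sums_swap_nonneg:
  fixes f :: "nat \<Rightarrow> nat \<Rightarrow> real"
  assumes nonneg: "\<And>n k. 0 \<le> f n k" and rows: "\<And>n. f n sums g n" and "g sums S"
  shows "(\<lambda>k. \<Sum>n. f n k) sums S"
proof -
  have rows': "((\<lambda>k. f n k) has_sum g n) UNIV" for n
    by (rule sums_nonneg_imp_has_sum[OF rows nonneg])
  have "g n \<ge> 0" for n
    using sums_unique[OF rows] suminf_nonneg[OF sums_summable[OF rows] nonneg] by simp
  then have g: "(g has_sum S) UNIV"
    using assms(3) by (simp add: sums_nonneg_imp_has_sum)
  have "(\<lambda>(n, k). f n k) summable_on UNIV \<times> UNIV"
    using summable_on_SigmaI[where f = "\<lambda>(n, k). f n k" and A = UNIV and B = "\<lambda>_. UNIV",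
        OF _ has_sum_imp_summable[OF g]] rows' nonneg
    by simp
  then have "((\<lambda>(n, k). f n k) has_sum S) (UNIV \<times> UNIV)"
    using has_sum_SigmaI[where f = "\<lambda>(n, k). f n k" and A = UNIV and B = "\<lambda>_. UNIV", OF _ g] rows'
    by simp
  from has_sum_swap[THEN iffD1, OF this]
  have swapped: "((\<lambda>(k, n). f n k) has_sum S) (UNIV \<times> UNIV)"
    by (simp add: case_prod_unfold)
  have "((\<lambda>n. f n k) has_sum (\<Sum>n. f n k)) UNIV" for k
  proof -
    have "(\<lambda>n. f n k) summable_on UNIV"
      using summable_on_SigmaD1[of "\<lambda>k n. f n k" UNIV "\<lambda>_. UNIV" k] has_sum_imp_summable[OF swapped]
      by simp
    then have "((\<lambda>n. f n k) has_sum infsum (\<lambda>n. f n k) UNIV) UNIV"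
      by (rule has_sum_infsum)
    moreover from this have "infsum (\<lambda>n. f n k) UNIV = (\<Sum>n. f n k)"
      by (rule sums_unique[OF has_sum_imp_sums])
    ultimately show ?thesis by simp
  qed
  then show ?thesis
    using has_sum_Sigma'[where f = "\<lambda>(k, n). f n k" and A = UNIV and B = "\<lambda>_. UNIV", OF swapped]
    by (simp add: has_sum_imp_sums)
qed

text \<open>The coefficients of u cot u, read off from the partial fractions by expanding each
  2u^2 / (c_n^2 - u^2) geometrically; for even k > 0 this is -2 zeta(k) / pi^k.\<close>

definition xcotx_coeff :: "nat \<Rightarrow> real" where
  "xcotx_coeff k = (if k = 0 then 1 else - (\<Sum>n. (1 + (-1) ^ k) / cot_pole n ^ k))"

text \<open>The n-th partial fraction of 1 - A cot A, as a quadratic form in x: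
  2A^2 / (c^2 - A^2) = c (c - A)^-1 + c (c + A)^-1 - 2 = sum_(k>0) (1 + (-1)^k) (A / c)^k.\<close>

definition pole_term :: "('v::real_inner \<Rightarrow> 'v) \<Rightarrow> 'v \<Rightarrow> nat \<Rightarrow> real" where
  "pole_term A x n = cot_pole n * (inner (resolvent A (cot_pole n) x) x
     + inner (resolvent (\<lambda>v. - A v) (cot_pole n) x) x) - 2 * inner x x"

definition pole_term_series :: "('v::real_inner \<Rightarrow> 'v) \<Rightarrow> 'v \<Rightarrow> nat \<Rightarrow> nat \<Rightarrow> real" where
  "pole_term_series A x n k =
     (if k = 0 then 0 else (1 + (-1) ^ k) / cot_pole n ^ k * inner ((A ^^ k) x) x)"

lemma pole_term_series_nonneg:
  assumes "selfadjoint A"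
  shows "0 \<le> pole_term_series A x n k"
proof -
  have "0 \<le> (1 + (-1) ^ k) * inner ((A ^^ k) x) x / cot_pole n ^ k"
    by (intro divide_nonneg_pos selfadjoint_even_power_nonneg[OF assms] zero_less_power
        cot_pole_pos)
  then show ?thesis by (simp add: pole_term_series_def)
qed

lemma pole_term_series_sums:
  fixes A :: "'v::{real_inner,banach} \<Rightarrow> 'v"
  assumes "bounded_linear A" "\<And>v. norm (A v) \<le> r * norm v" "0 \<le> r" "r < pi"
  shows "pole_term_series A x n sums pole_term A x n"
proof -
  define c where "c = cot_pole n"
  have c: "0 < c" "r < c"
    using cot_pole_pos cot_pole_ge_pi assms(4) by (auto simp: c_def intro: less_le_trans)
  have "(\<lambda>k. inverse c ^ Suc k * inner ((A ^^ k) x) x) sums inner (resolvent A c x) x"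
    by (rule inner_resolvent_sums[OF assms(1-3) c(2)])
  moreover have "(\<lambda>k. inverse c ^ Suc k * ((-1) ^ k * inner ((A ^^ k) x) x))
      sums inner (resolvent (\<lambda>v. - A v) c x) x"
    using inner_resolvent_sums[OF bounded_linear_minus[OF assms(1)] _ assms(3) c(2)] assms(2)
    by (simp add: funpow_uminus[OF bounded_linear.linear[OF assms(1)]])
  ultimately have "(\<lambda>k. c * (inverse c ^ Suc k * inner ((A ^^ k) x) x
        + inverse c ^ Suc k * ((-1) ^ k * inner ((A ^^ k) x) x))
      - (if k = 0 then 2 * inner x x else 0)) sums pole_term A x n"
    unfolding pole_term_def c_def[symmetric] by (intro sums_diff sums_mult sums_add sums_single)
  moreover have "c * (inverse c ^ Suc k * inner ((A ^^ k) x) x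
        + inverse c ^ Suc k * ((-1) ^ k * inner ((A ^^ k) x) x))
      - (if k = 0 then 2 * inner x x else 0) = pole_term_series A x n k" for k
    using c by (simp add: pole_term_series_def c_def[symmetric] field_simps)
  ultimately show ?thesis by simp
qed

lemma pole_term_nonneg:
  fixes A :: "'v::{real_inner,banach} \<Rightarrow> 'v"
  assumes "bounded_linear A" "selfadjoint A" "\<And>v. norm (A v) \<le> r * norm v" "0 \<le> r" "r < pi"
  shows "0 \<le> pole_term A x n"
proof -
  note sums = pole_term_series_sums[OF assms(1,3-5), where x = x and n = n]
  show ?thesis
    using sums_unique[OF sums]
      suminf_nonneg[OF sums_summable[OF sums] pole_term_series_nonneg[OF assms(2)]]
    by simp
qed

lemma pole_term_le:
  fixes A :: "'v::{real_inner,banach} \<Rightarrow> 'v"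
  assumes "bounded_linear A" "\<And>v. norm (A v) \<le> r * norm v" "0 \<le> r" "r < pi"
  shows "pole_term A x n \<le> inner x x * (2 * r\<^sup>2 / ((cot_pole n)\<^sup>2 - r\<^sup>2))"
proof (rule sums_le[OF _ pole_term_series_sums[OF assms] sums_mult[OF sums_even_powers]])
  show "\<bar>r\<bar> < cot_pole n" using assms(3,4) cot_pole_ge_pi[of n] by linarith
  fix k :: nat
  have "inner ((A ^^ k) x) x \<le> norm ((A ^^ k) x) * norm x"
    by (rule real_inner_class.Cauchy_Schwarz_ineq2[THEN abs_le_D1])
  also have "\<dots> \<le> r ^ k * norm x * norm x"
    using norm_funpow_le[OF assms(2,3)] by (simp add: mult_right_mono)
  moreover have "0 \<le> 1 + (-1 :: real) ^ k" by (cases "even k") auto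
  ultimately have "(1 + (-1) ^ k) * inner ((A ^^ k) x) x \<le> (1 + (-1) ^ k) * (r ^ k * inner x x)"
    by (intro mult_left_mono) (auto simp: power2_norm_eq_inner[symmetric] power2_eq_square)
  then have "(1 + (-1) ^ k) * inner ((A ^^ k) x) x / cot_pole n ^ k
      \<le> (1 + (-1) ^ k) * (r ^ k * inner x x) / cot_pole n ^ k"
    using cot_pole_pos[of n] by (intro divide_right_mono) auto
  then show "pole_term_series A x n k
      \<le> inner x x * ((1 + (-1) ^ k) * (r / cot_pole n) ^ k - (if k = 0 then 2 else 0))"
    by (simp add: pole_term_series_def power_divide algebra_simps)
qed

lemma summable_pole_term:
  fixes A :: "'v::{real_inner,banach} \<Rightarrow> 'v"
  assumes "bounded_linear A" "selfadjoint A" "\<And>v. norm (A v) \<le> r * norm v" "0 \<le> r" "r < pi"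
  shows "summable (pole_term A x)"
proof -
  \<comment> \<open>The comparison series is the partial fraction expansion at the bound, which needs
    a nonzero bound.\<close>
  define \<rho> where "\<rho> = max r (pi / 2)"
  have \<rho>: "0 \<le> \<rho>" "0 < \<rho>" "\<rho> < pi"
    using assms(5) pi_gt_zero by (auto simp: \<rho>_def max_def)
  have bound: "norm (A v) \<le> \<rho> * norm v" for v
    using assms(3)[of v] mult_right_mono[of r \<rho> "norm v"] by (simp add: \<rho>_def)
  show ?thesis
  proof (rule summable_comparison_test')
    show "summable (\<lambda>n. inner x x * (2 * \<rho>\<^sup>2 / ((cot_pole n)\<^sup>2 - \<rho>\<^sup>2)))"
      using sums_cot_partial_fractions[of \<rho>] \<rho> by (intro summable_mult sums_summable) auto
    show "norm (pole_term A x n) \<le> inner x x * (2 * \<rho>\<^sup>2 / ((cot_pole n)\<^sup>2 - \<rho>\<^sup>2))" for n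
      using pole_term_nonneg[OF assms(1,2) bound \<rho>(1,3)] pole_term_le[OF assms(1) bound \<rho>(1,3)]
      by simp
  qed
qed

lemma xcotx_coeff_series:
  fixes A :: "'v::{real_inner,banach} \<Rightarrow> 'v"
  assumes "bounded_linear A" "selfadjoint A" "\<And>v. norm (A v) \<le> r * norm v" "0 \<le> r" "r < pi"
  shows "(\<lambda>k. xcotx_coeff k * inner ((A ^^ k) x) x) sums (inner x x - (\<Sum>n. pole_term A x n))"
proof -
  have "(\<Sum>n. pole_term_series A x n k)
      = (if k = 0 then inner x x else 0) - xcotx_coeff k * inner ((A ^^ k) x) x" for k
  proof (cases "k = 0")
    case False
    then have "(\<Sum>n. pole_term_series A x n k)
        = (\<Sum>n. (1 + (-1) ^ k) / cot_pole n ^ k) * inner ((A ^^ k) x) x"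
      by (simp add: pole_term_series_def suminf_mult2[OF summable_pole_powers])
    with False show ?thesis by (simp add: xcotx_coeff_def)
  qed (simp add: pole_term_series_def xcotx_coeff_def)
  with sums_swap_nonneg[OF pole_term_series_nonneg[OF assms(2)]
      pole_term_series_sums[OF assms(1,3-5), where x = x]
      summable_sums[OF summable_pole_term[OF assms, where x = x]]]
  have "(\<lambda>k. (if k = 0 then inner x x else 0) - xcotx_coeff k * inner ((A ^^ k) x) x)
      sums (\<Sum>n. pole_term A x n)"
    by simp
  from sums_diff[OF sums_single[of 0 "\<lambda>_. inner x x"] this] show ?thesis
    by simp
qed

lemma pole_term_scalar:
  fixes u :: real
  assumes "\<bar>u\<bar> < pi"
  shows "pole_term ((*) u) 1 n = 2 * u\<^sup>2 / ((cot_pole n)\<^sup>2 - u\<^sup>2)"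
proof -
  have u: "\<bar>u\<bar> < cot_pole n" "\<bar>- u\<bar> < cot_pole n"
    using assms cot_pole_ge_pi[of n] by auto
  have "(\<lambda>v. - (u * v)) = (*) (- u)" by auto
  then have "pole_term ((*) u) 1 n = cot_pole n * (1 / (cot_pole n - u) + 1 / (cot_pole n + u)) - 2"
    by (simp add: pole_term_def resolvent_scalar[OF u(1)] resolvent_scalar[OF u(2)])
  moreover have "cot_pole n - u \<noteq> 0" "cot_pole n + u \<noteq> 0" using u by auto
  moreover have "0 < (cot_pole n - u) * (cot_pole n + u)"
    using u by (intro mult_pos_pos) auto
  then have "cot_pole n * cot_pole n - u * u \<noteq> 0" by (simp add: algebra_simps)
  ultimately show ?thesis by (simp add: field_simps power2_eq_square)
qed

lemma sums_xcotx_coeff: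
  fixes u :: real
  assumes "\<bar>u\<bar> < pi"
  shows "(\<lambda>k. xcotx_coeff k * u ^ k) sums (if u = 0 then 1 else u * cot u)"
proof -
  have "((*) u ^^ k) 1 = u ^ k" for k by (induction k) simp_all
  then have "(\<lambda>k. xcotx_coeff k * u ^ k) sums (1 - (\<Sum>n. 2 * u\<^sup>2 / ((cot_pole n)\<^sup>2 - u\<^sup>2)))"
    using xcotx_coeff_series[where x = 1, OF bounded_linear_mult_right[of u] _ _ abs_ge_zero assms]
    by (simp add: selfadjoint_def pole_term_scalar[OF assms] abs_mult)
  moreover have "(\<Sum>n. 2 * u\<^sup>2 / ((cot_pole n)\<^sup>2 - u\<^sup>2)) = (if u = 0 then 0 else 1 - u * cot u)"
    using sums_cot_partial_fractions[of u] assms by (simp add: sums_iff)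
  ultimately show ?thesis by (simp split: if_splits)
qed

lemma xcotx_has_fps_expansion:
  "(\<lambda>u::real. if u = 0 then 1 else u * cot u) has_fps_expansion xcotx_fps"
proof -
  have "fps_nth (fps_sin (1::real)) 1 \<noteq> 0" by simp
  then have "fps_sin (1::real) \<noteq> 0" by (metis fps_zero_nth)
  then have "1 \<le> subdegree (fps_sin (1::real))"
    by (intro subdegree_geI) simp_all
  from has_fps_expansion_shift[OF has_fps_expansion_sin' this refl]
  have "(\<lambda>u::real. if u = 0 then 1 else sin u / u) has_fps_expansion fps_shift 1 (fps_sin 1)"
    by (simp cong: if_cong)
  from has_fps_expansion_divide'[OF has_fps_expansion_cos' this]
  have "(\<lambda>u::real. cos u / (if u = 0 then 1 else sin u / u))
      has_fps_expansion fps_cos 1 / fps_shift 1 (fps_sin 1)"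
    by simp
  moreover have "fps_cos 1 / fps_shift 1 (fps_sin (1::real)) = xcotx_fps"
    unfolding xcotx_fps_def by (rule fps_divide_unit) simp
  moreover have "cos u / (if u = 0 then 1 else sin u / u) = (if u = 0 then 1 else u * cot u)"
    for u :: real
    by (simp add: cot_def)
  ultimately show ?thesis by simp
qed

lemma fps_nth_xcotx_fps: "fps_nth xcotx_fps k = xcotx_coeff k"
proof -
  have "eventually (\<lambda>u. u \<in> ball (0::real) pi) (nhds 0)"
    using pi_gt_zero by (intro eventually_nhds_in_open) auto
  then have "eventually (\<lambda>u. (\<lambda>k. fps_nth (Abs_fps xcotx_coeff) k * u ^ k)
      sums (if u = 0 then 1 else u * cot u)) (nhds 0)"
  proof (rule eventually_mono)
    show "(\<lambda>k. fps_nth (Abs_fps xcotx_coeff) k * u ^ k) sums (if u = 0 then 1 else u * cot u)"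
      if "u \<in> ball 0 pi" for u :: real
      unfolding fps_nth_Abs_fps using that by (intro sums_xcotx_coeff) simp
  qed
  then have "(\<lambda>u::real. if u = 0 then 1 else u * cot u) has_fps_expansion Abs_fps xcotx_coeff"
    by (rule has_fps_expansionI)
  from has_fps_expansion_unique[OF xcotx_has_fps_expansion this] show ?thesis
    by (metis fps_nth_Abs_fps)
qed

lemma summable_abs_xcotx_coeff:
  assumes "0 \<le> r" "r < pi"
  shows "summable (\<lambda>k. \<bar>xcotx_coeff k\<bar> * r ^ k)"
proof -
  have "xcotx_coeff k \<le> 0" if "1 \<le> k" for k
  proof -
    have "0 \<le> (1 + (-1) ^ k) / cot_pole n ^ k" for n
      using cot_pole_pos[of n] by (cases "even k") auto
    then show ?thesis
      using that by (simp add: xcotx_coeff_def suminf_nonneg[OF summable_pole_powers])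
  qed
  then have "eventually (\<lambda>k. - (xcotx_coeff k * r ^ k) = \<bar>xcotx_coeff k\<bar> * r ^ k) sequentially"
    using assms(1) by (intro eventually_sequentiallyI[of 1]) simp
  moreover have "summable (\<lambda>k. - (xcotx_coeff k * r ^ k))"
    using sums_xcotx_coeff[of r] assms by (intro summable_minus sums_summable) auto
  ultimately show ?thesis by (simp add: summable_cong)
qed

lemma pole_term_concavity_gap:
  fixes Aa Ab :: "'v::{real_inner,banach} \<Rightarrow> 'v"
  assumes "bounded_linear Aa" "bounded_linear Ab" "selfadjoint Aa" "selfadjoint Ab"
    and "\<And>v. norm (Aa v) \<le> r * norm v" "\<And>v. norm (Ab v) \<le> r * norm v"
    and "0 \<le> r" "r < pi" "0 \<le> s" "s \<le> 1"
    and y: "y = resolvent (\<lambda>v. s *\<^sub>R Aa v + (1 - s) *\<^sub>R Ab v) (cot_pole n) x"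
  shows "s * (1 - s) / 2 * (norm (Aa y - Ab y))\<^sup>2
    \<le> s * pole_term Aa x n + (1 - s) * pole_term Ab x n
      - pole_term (\<lambda>v. s *\<^sub>R Aa v + (1 - s) *\<^sub>R Ab v) x n"
proof -
  define c where "c = cot_pole n"
  have c: "0 < c" "r < c"
    using cot_pole_pos cot_pole_ge_pi assms(8) by (auto simp: c_def intro: less_le_trans)
  define gap where "gap A B = s * inner (resolvent A c x) x + (1 - s) * inner (resolvent B c x) x
    - inner (resolvent (\<lambda>v. s *\<^sub>R A v + (1 - s) *\<^sub>R B v) c x) x" for A B :: "'v \<Rightarrow> 'v"
  have gap1: "s * (1 - s) * (norm (Aa y - Ab y))\<^sup>2 \<le> 2 * c * gap Aa Ab"
    unfolding gap_def y c_def
    by (rule inner_resolvent_convexity_gap[OF assms(1-7) c(2)[unfolded c_def] assms(9,10) refl])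
  have "0 \<le> gap (\<lambda>v. - Aa v) (\<lambda>v. - Ab v)"
    unfolding gap_def
    using inner_resolvent_convex[OF bounded_linear_minus[OF assms(1)]
        bounded_linear_minus[OF assms(2)] selfadjoint_uminus[OF assms(3)]
        selfadjoint_uminus[OF assms(4)] _ _ assms(7) c(2) assms(9,10)] assms(5,6)
    by simp
  then have gap2: "0 \<le> c * gap (\<lambda>v. - Aa v) (\<lambda>v. - Ab v)"
    using c(1) by simp
  have "(\<lambda>v. s *\<^sub>R (- Aa v) + (1 - s) *\<^sub>R (- Ab v)) = (\<lambda>v. - (s *\<^sub>R Aa v + (1 - s) *\<^sub>R Ab v))"
    by (simp add: fun_eq_iff)
  then have "s * pole_term Aa x n + (1 - s) * pole_term Ab x n
      - pole_term (\<lambda>v. s *\<^sub>R Aa v + (1 - s) *\<^sub>R Ab v) x n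
    = c * gap Aa Ab + c * gap (\<lambda>v. - Aa v) (\<lambda>v. - Ab v)"
    by (simp add: pole_term_def gap_def c_def algebra_simps)
  moreover have "s * (1 - s) / 2 * (norm (Aa y - Ab y))\<^sup>2 \<le> c * gap Aa Ab"
    using gap1 by simp
  ultimately show ?thesis using gap2 by linarith
qed

definition xcotx_form :: "('v::real_inner \<Rightarrow> 'v) \<Rightarrow> 'v \<Rightarrow> real" where
  "xcotx_form A x = (\<Sum>k. xcotx_coeff k * inner ((A ^^ k) x) x)"

lemma xcotx_form_eq_pole_sum:
  fixes A :: "'v::{real_inner,banach} \<Rightarrow> 'v"
  assumes "bounded_linear A" "selfadjoint A" "\<And>v. norm (A v) \<le> r * norm v" "0 \<le> r" "r < pi"
  shows "xcotx_form A x = inner x x - (\<Sum>n. pole_term A x n)"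
  unfolding xcotx_form_def by (rule sums_unique[OF xcotx_coeff_series[OF assms], symmetric])

lemma xcotx_form_concavity_gap:
  fixes Aa Ab :: "'v::{real_inner,banach} \<Rightarrow> 'v"
  assumes "bounded_linear Aa" "bounded_linear Ab" "selfadjoint Aa" "selfadjoint Ab"
    and "\<And>v. norm (Aa v) \<le> r * norm v" "\<And>v. norm (Ab v) \<le> r * norm v"
    and "0 \<le> r" "r < pi" "0 \<le> s" "s \<le> 1"
    and y: "y = resolvent (\<lambda>v. s *\<^sub>R Aa v + (1 - s) *\<^sub>R Ab v) pi x"
  shows "s * xcotx_form Aa x + (1 - s) * xcotx_form Ab x + s * (1 - s) / 2 * (norm (Aa y - Ab y))\<^sup>2
    \<le> xcotx_form (\<lambda>v. s *\<^sub>R Aa v + (1 - s) *\<^sub>R Ab v) x"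
proof -
  define M where "M = (\<lambda>v. s *\<^sub>R Aa v + (1 - s) *\<^sub>R Ab v)"
  have M: "bounded_linear M" "selfadjoint M" "\<And>v. norm (M v) \<le> r * norm v"
    using convex_comb_operator[OF assms(1,2,5,6,9,10)] selfadjoint_lincomb[OF assms(3,4)]
    by (simp_all add: M_def)
  define gap where
    "gap n = s * pole_term Aa x n + (1 - s) * pole_term Ab x n - pole_term M x n" for n
  have "gap sums (s * (\<Sum>n. pole_term Aa x n) + (1 - s) * (\<Sum>n. pole_term Ab x n)
      - (\<Sum>n. pole_term M x n))"
    unfolding gap_def
    by (intro sums_diff sums_add sums_mult summable_sums summable_pole_term[where r = r]
        assms(1-8) M)
  then have "xcotx_form M x - s * xcotx_form Aa x - (1 - s) * xcotx_form Ab x = suminf gap"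
      and summable: "summable gap"
    by (simp_all add: sums_iff xcotx_form_eq_pole_sum[OF _ _ _ assms(7,8)] assms(1-6) M
        algebra_simps)
  moreover have gap_lower: "s * (1 - s) / 2 * (norm (Aa y' - Ab y'))\<^sup>2 \<le> gap n"
    if "y' = resolvent M (cot_pole n) x" for y' n
    unfolding gap_def M_def by (rule pole_term_concavity_gap[OF assms(1-10) that[unfolded M_def]])
  then have "gap n \<ge> 0" for n
    using assms(9,10) order_trans[OF _ gap_lower[OF refl]] by simp
  then have "gap 0 \<le> suminf gap"
    using sum_le_suminf[OF summable, of "{0}"] by simp
  moreover have "s * (1 - s) / 2 * (norm (Aa y - Ab y))\<^sup>2 \<le> gap 0"
    using gap_lower[of y 0] y by (simp add: M_def cot_pole_def)
  ultimately show ?thesis by (simp add: M_def)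
qed

lemma xcotx_form_strongly_concave:
  fixes Aa Ab :: "'v::{real_inner,banach} \<Rightarrow> 'v"
  assumes "bounded_linear Aa" "bounded_linear Ab" "selfadjoint Aa" "selfadjoint Ab"
    and "\<And>v. norm (Aa v) \<le> r * norm v" "\<And>v. norm (Ab v) \<le> r * norm v"
    and "0 \<le> r" "r < pi" "0 \<le> s" "s \<le> 1"
    and sep: "0 \<le> \<delta>" "\<And>v. \<delta> * norm v \<le> norm (Aa v - Ab v)"
  shows "s * xcotx_form Aa x + (1 - s) * xcotx_form Ab x
      + s * (1 - s) / 2 * (\<delta> * norm x / (2 * pi))\<^sup>2
    \<le> xcotx_form (\<lambda>v. s *\<^sub>R Aa v + (1 - s) *\<^sub>R Ab v) x"
proof -
  define y where "y = resolvent (\<lambda>v. s *\<^sub>R Aa v + (1 - s) *\<^sub>R Ab v) pi x"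
  have "norm x \<le> (pi + r) * norm y"
    unfolding y_def
    by (rule norm_le_resolvent[OF convex_comb_operator[OF assms(1,2,5,6,9,10)] assms(7,8)])
  also have "\<dots> \<le> 2 * pi * norm y"
    using assms(8) by (simp add: mult_right_mono)
  finally have "\<delta> * norm x \<le> \<delta> * (2 * pi * norm y)"
    using sep(1) by (rule mult_left_mono)
  then have "\<delta> * norm x / (2 * pi) \<le> \<delta> * norm y"
    using pi_gt_zero by (simp add: divide_le_eq mult_ac)
  also have "\<dots> \<le> norm (Aa y - Ab y)" by (rule sep(2))
  finally have "(\<delta> * norm x / (2 * pi))\<^sup>2 \<le> (norm (Aa y - Ab y))\<^sup>2"
    using sep(1) pi_gt_zero by (intro power_mono) auto
  then have "s * (1 - s) / 2 * (\<delta> * norm x / (2 * pi))\<^sup>2 \<le> s * (1 - s) / 2 * (norm (Aa y - Ab y))\<^sup>2"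
    using assms(9,10) by (intro mult_left_mono) auto
  with xcotx_form_concavity_gap[OF assms(1-10) y_def] show ?thesis by linarith
qed

section \<open>The matrices U(tau)\<close>

lemma Umat_mult_component:
  "(Umat Us \<tau> *v v) $ i = (\<Sum>k\<in>UNIV. \<i> * complex_of_real (\<Sum>j\<in>UNIV. \<tau> $ j * Us j $ i $ k) * v $ k)"
  by (simp add: Umat_def matrix_vector_mult_def)

lemma Umat_lincomb:
  "Umat Us (s *\<^sub>R a + r *\<^sub>R b) *v v = s *\<^sub>R (Umat Us a *v v) + r *\<^sub>R (Umat Us b *v v)"
  by (simp add: vec_eq_iff Umat_mult_component scaleR_conv_of_real[where 'a = complex]
      sum_distrib_left sum.distrib[symmetric] algebra_simps)

lemma Umat_diff: "Umat Us (a - b) *v v = Umat Us a *v v - Umat Us b *v v"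
  using Umat_lincomb[of Us 1 a "-1" b v] by simp

lemma Umat_scaleR: "Umat Us (s *\<^sub>R a) *v v = s *\<^sub>R (Umat Us a *v v)"
  using Umat_lincomb[of Us s a 0 0 v] by simp

lemma Umat_mult_scaleR: "Umat Us a *v (s *\<^sub>R v) = s *\<^sub>R (Umat Us a *v v)"
  by (simp add: vec_eq_iff Umat_mult_component scaleR_conv_of_real[where 'a = complex]
      sum_distrib_left algebra_simps)

lemma inner_Umat:
  "inner (Umat Us \<tau> *v v) w = (\<Sum>i\<in>UNIV. \<Sum>k\<in>UNIV. (\<Sum>j\<in>UNIV. \<tau> $ j * Us j $ i $ k)
     * (Re (v $ k) * Im (w $ i) - Im (v $ k) * Re (w $ i)))"
proof -
  define S where "S i k = (\<Sum>j\<in>UNIV. \<tau> $ j * Us j $ i $ k)" for i k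
  have "inner ((Umat Us \<tau> *v v) $ i) (w $ i)
      = (\<Sum>k\<in>UNIV. S i k * (Re (v $ k) * Im (w $ i) - Im (v $ k) * Re (w $ i)))" for i
  proof -
    have "inner ((Umat Us \<tau> *v v) $ i) (w $ i)
        = Re (w $ i) * (\<Sum>k\<in>UNIV. - (S i k * Im (v $ k)))
          + Im (w $ i) * (\<Sum>k\<in>UNIV. S i k * Re (v $ k))"
      by (simp add: Umat_mult_component S_def inner_complex_def mult.commute)
    also have "\<dots> = (\<Sum>k\<in>UNIV. Re (w $ i) * - (S i k * Im (v $ k))
        + Im (w $ i) * (S i k * Re (v $ k)))"
      by (simp only: sum_distrib_left sum.distrib)
    also have "\<dots> = (\<Sum>k\<in>UNIV. S i k * (Re (v $ k) * Im (w $ i) - Im (v $ k) * Re (w $ i)))"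
      by (intro sum.cong refl) (simp add: algebra_simps)
    finally show ?thesis .
  qed
  then show ?thesis by (simp add: inner_vec_def S_def)
qed

lemma selfadjoint_Umat:
  fixes Us :: "'m::finite \<Rightarrow> real^'q::finite^'q"
  assumes skew: "\<And>j. transpose (Us j) = - Us j"
  shows "selfadjoint (\<lambda>v. Umat Us \<tau> *v v)"
  unfolding selfadjoint_def
proof (intro allI)
  fix v w :: "complex ^ 'q"
  define S where "S i k = (\<Sum>j\<in>UNIV. \<tau> $ j * Us j $ i $ k)" for i k
  have S: "S k i = - S i k" for i k
  proof -
    have "Us j $ k $ i = - Us j $ i $ k" for j
      using arg_cong[OF skew[of j], of "\<lambda>M. M $ i $ k"] by (simp add: transpose_def)
    then show ?thesis by (simp add: S_def sum_negf[symmetric])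
  qed
  have "inner v (Umat Us \<tau> *v w) = inner (Umat Us \<tau> *v w) v" by (rule inner_commute)
  also have "\<dots> = (\<Sum>k\<in>UNIV. \<Sum>i\<in>UNIV. S i k * (Re (w $ k) * Im (v $ i) - Im (w $ k) * Re (v $ i)))"
    unfolding inner_Umat S_def by (rule sum.swap)
  also have "\<dots> = (\<Sum>k\<in>UNIV. \<Sum>i\<in>UNIV. S k i * (Re (v $ i) * Im (w $ k) - Im (v $ i) * Re (w $ k)))"
    by (intro sum.cong refl, subst S) (simp add: algebra_simps)
  also have "\<dots> = inner (Umat Us \<tau> *v v) w"
    unfolding inner_Umat S_def ..
  finally show "inner (Umat Us \<tau> *v v) w = inner v (Umat Us \<tau> *v w)" ..
qed

lemma metivier_lower_bound:
  fixes Us :: "'m::finite \<Rightarrow> real^'q::finite^'q"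
  assumes "metivier Us"
  obtains \<sigma> where "\<sigma> > 0" "\<And>h v. \<sigma> * norm h * norm v \<le> norm (Umat Us h *v (v :: complex^'q))"
proof -
  define K where "K = sphere (0::real^'m) 1 \<times> sphere (0::complex^'q) 1"
  have cont: "continuous_on UNIV (\<lambda>p::(real^'m) \<times> (complex^'q). norm (Umat Us (fst p) *v snd p))"
    unfolding Umat_def matrix_vector_mult_def by (intro continuous_intros)
  have cK: "compact K" unfolding K_def by (intro compact_Times compact_sphere)
  have neK: "K \<noteq> {}" unfolding K_def by simp
  obtain p0 where p0: "p0 \<in> K"
    and min: "\<And>p. p \<in> K \<Longrightarrow> norm (Umat Us (fst p0) *v snd p0) \<le> norm (Umat Us (fst p) *v snd p)"
    using continuous_attains_inf[OF cK neK continuous_on_subset[OF cont subset_UNIV]] by blast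
  define \<sigma> where "\<sigma> = norm (Umat Us (fst p0) *v snd p0)"
  have "\<sigma> > 0"
  proof -
    have "fst p0 \<noteq> 0" "snd p0 \<noteq> 0" using p0 by (auto simp: K_def)
    with assms obtain B where B: "B ** Umat Us (fst p0) = mat 1"
      by (auto simp: metivier_def invertible_def)
    have "snd p0 = B *v (Umat Us (fst p0) *v snd p0)" by (simp add: matrix_vector_mul_assoc B)
    with \<open>snd p0 \<noteq> 0\<close> show ?thesis by (auto simp: \<sigma>_def)
  qed
  moreover have "\<sigma> * norm h * norm v \<le> norm (Umat Us h *v v)" for h v
  proof (cases "h = 0 \<or> v = 0")
    case False
    then have hv: "norm h > 0" "norm v > 0" by auto
    then have "(inverse (norm h) *\<^sub>R h, inverse (norm v) *\<^sub>R v) \<in> K" by (simp add: K_def)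
    from min[OF this] have "\<sigma> \<le> norm ((inverse (norm h) * inverse (norm v)) *\<^sub>R (Umat Us h *v v))"
      by (simp add: \<sigma>_def Umat_scaleR Umat_mult_scaleR mult.commute)
    also have "\<dots> = norm (Umat Us h *v v) / (norm h * norm v)"
      using hv by (simp add: field_simps)
    finally show ?thesis using hv by (simp add: field_simps)
  qed (use \<open>\<sigma> > 0\<close> in auto)
  ultimately show ?thesis using that by blast
qed

definition complex_vec :: "real^'n \<Rightarrow> complex^'n" where
  "complex_vec x = (\<chi> i. complex_of_real (x $ i))"

definition quad_form :: "real^'n \<Rightarrow> complex^'n^'n \<Rightarrow> real" where
  "quad_form x M =
     Re (\<Sum>i\<in>UNIV. \<Sum>k\<in>UNIV. M $ i $ k * complex_of_real (x $ k) * complex_of_real (x $ i))"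

lemma quad_form_eq_inner: "quad_form x M = inner (M *v complex_vec x) (complex_vec x)"
  by (simp add: quad_form_def inner_vec_def complex_vec_def matrix_vector_mult_def inner_complex_def
      sum_distrib_right mult.assoc)

lemma bounded_linear_quad_form: "bounded_linear (quad_form x)"
proof -
  have "linear (quad_form x)"
    by (rule linearI) (simp_all add: quad_form_def sum.distrib distrib_right
        scaleR_conv_of_real[where 'a = complex] sum_distrib_left mult.assoc)
  then show ?thesis using linear_conv_bounded_linear by blast
qed

lemma mat_pow_mult: "mat_pow M k *v v = ((\<lambda>v. M *v v) ^^ k) v"
  by (induction k) (simp_all add: matrix_vector_mul_assoc[symmetric])

lemma norm_mat_pow_le:
  fixes M :: "complex^'n^'n"
  assumes "\<And>v. norm (M *v v) \<le> r * norm v" "0 \<le> r"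
  shows "norm (mat_pow M k) \<le> real (CARD('n) * CARD('n)) * r ^ k"
proof -
  have entry: "norm (mat_pow M k $ i $ j) \<le> r ^ k" for i j
  proof -
    have "norm (mat_pow M k $ i $ j) = norm ((mat_pow M k *v axis j 1) $ i)"
      by (simp add: matrix_vector_mult_def axis_def if_distrib cong: if_cong)
    also have "\<dots> \<le> norm (mat_pow M k *v axis j 1)"
      by (rule Finite_Cartesian_Product.norm_nth_le)
    also have "\<dots> \<le> r ^ k * norm (axis j (1::complex))"
      unfolding mat_pow_mult by (rule norm_funpow_le[OF assms])
    finally show ?thesis by (simp add: norm_eq_1 inner_axis')
  qed
  have l1: "norm v \<le> (\<Sum>i\<in>UNIV. norm (v $ i))" for v :: "'a::real_normed_vector^'n"
    by (simp add: norm_vec_def L2_set_le_sum)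
  have "norm (mat_pow M k) \<le> (\<Sum>i\<in>UNIV. \<Sum>j\<in>UNIV. norm (mat_pow M k $ i $ j))"
    by (rule order_trans[OF l1 sum_mono[OF l1]])
  also have "\<dots> \<le> (\<Sum>i\<in>(UNIV::'n set). \<Sum>j\<in>(UNIV::'n set). r ^ k)"
    by (intro sum_mono entry)
  finally show ?thesis by simp
qed

lemma phi_eq_xcotx_form:
  fixes Us :: "'m::finite \<Rightarrow> real^'q::finite^'q"
  assumes bound: "\<And>v. norm (Umat Us \<tau> *v v) \<le> r * norm v" and r: "0 \<le> r" "r < pi"
  shows "phi Us x t \<tau> = xcotx_form (\<lambda>v. Umat Us \<tau> *v v) (complex_vec x) + 4 * (t \<bullet> \<tau>)"
proof -
  define U where "U = Umat Us \<tau>"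
  define K where "K = real (CARD('q) * CARD('q))"
  have "summable (\<lambda>k. xcotx_coeff k *\<^sub>R mat_pow U k)"
  proof (rule summable_comparison_test')
    show "summable (\<lambda>k. K * (\<bar>xcotx_coeff k\<bar> * r ^ k))"
      by (intro summable_mult summable_abs_xcotx_coeff r)
    show "norm (xcotx_coeff k *\<^sub>R mat_pow U k) \<le> K * (\<bar>xcotx_coeff k\<bar> * r ^ k)" for k
      using mult_left_mono[OF norm_mat_pow_le[OF bound[folded U_def] r(1)], of "\<bar>xcotx_coeff k\<bar>" k]
      by (simp add: K_def mult_ac)
  qed
  then have "(\<lambda>k. xcotx_coeff k *\<^sub>R mat_pow U k) sums mat_xcotx U"
    by (simp add: mat_xcotx_def fps_nth_xcotx_fps summable_sums)
  from bounded_linear.sums[OF bounded_linear_quad_form this, of x]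
  have "(\<lambda>k. xcotx_coeff k * quad_form x (mat_pow U k)) sums quad_form x (mat_xcotx U)"
    by (simp add: linear_cmul[OF bounded_linear.linear[OF bounded_linear_quad_form]])
  then have "(\<lambda>k. xcotx_coeff k * inner (((\<lambda>v. U *v v) ^^ k) (complex_vec x)) (complex_vec x))
      sums quad_form x (mat_xcotx U)"
    by (simp add: quad_form_eq_inner mat_pow_mult)
  then show ?thesis
    by (simp add: phi_def quad_form_def xcotx_form_def sums_iff U_def)
qed

lemma phi_convex_comb_diff:
  fixes Us :: "'m::finite \<Rightarrow> real^'q::finite^'q"
  assumes "\<And>v. norm (Umat Us a *v v) \<le> r * norm v" "\<And>v. norm (Umat Us b *v v) \<le> r * norm v"
    and "0 \<le> r" "r < pi" "0 \<le> s" "s \<le> 1"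
  shows "phi Us x t (s *\<^sub>R a + (1 - s) *\<^sub>R b) - s * phi Us x t a - (1 - s) * phi Us x t b
    = xcotx_form (\<lambda>v. s *\<^sub>R (Umat Us a *v v) + (1 - s) *\<^sub>R (Umat Us b *v v)) (complex_vec x)
      - s * xcotx_form (\<lambda>v. Umat Us a *v v) (complex_vec x)
      - (1 - s) * xcotx_form (\<lambda>v. Umat Us b *v v) (complex_vec x)"
proof -
  have mix: "Umat Us (s *\<^sub>R a + (1 - s) *\<^sub>R b) *v v
      = s *\<^sub>R (Umat Us a *v v) + (1 - s) *\<^sub>R (Umat Us b *v v)" for v
    by (rule Umat_lincomb)
  then have "norm (Umat Us (s *\<^sub>R a + (1 - s) *\<^sub>R b) *v v) \<le> r * norm v" for v
    using convex_comb_operator(2)[OF _ _ assms(1,2,5,6)] by simp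
  from phi_eq_xcotx_form[OF this assms(3,4)]
  have "phi Us x t (s *\<^sub>R a + (1 - s) *\<^sub>R b)
      = xcotx_form (\<lambda>v. s *\<^sub>R (Umat Us a *v v) + (1 - s) *\<^sub>R (Umat Us b *v v)) (complex_vec x)
        + 4 * (t \<bullet> (s *\<^sub>R a + (1 - s) *\<^sub>R b))"
    by (simp only: mix)
  then show ?thesis
    using phi_eq_xcotx_form[OF assms(1,3,4)] phi_eq_xcotx_form[OF assms(2,3,4)]
    by (simp add: algebra_simps)
qed

lemma phi_strongly_concave:
  fixes Us :: "'m::finite \<Rightarrow> real^'q::finite^'q"
  assumes skew: "\<And>j. transpose (Us j) = - Us j"
    and \<sigma>: "0 \<le> \<sigma>" "\<And>h v. \<sigma> * norm h * norm v \<le> norm (Umat Us h *v (v :: complex^'q))"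
    and ab: "a \<in> Omega_star Us" "b \<in> Omega_star Us" and s: "0 \<le> s" "s \<le> 1"
  shows "s * phi Us x t a + (1 - s) * phi Us x t b
      + s * (1 - s) / 2 * (\<sigma> * norm (a - b) * norm (complex_vec x) / (2 * pi))\<^sup>2
    \<le> phi Us x t (s *\<^sub>R a + (1 - s) *\<^sub>R b)"
proof -
  define A where "A = (\<lambda>v. Umat Us a *v v)"
  define B where "B = (\<lambda>v. Umat Us b *v v)"
  define r where "r = max (onorm A) (onorm B)"
  have bl: "bounded_linear A" "bounded_linear B" by (simp_all add: A_def B_def)
  have sa: "selfadjoint A" "selfadjoint B"
    using selfadjoint_Umat[OF skew] by (simp_all add: A_def B_def)
  have r: "0 \<le> r" "r < pi"
    using ab onorm_pos_le[OF bl(1)] by (auto simp: r_def A_def B_def Omega_star_def)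
  have bound: "norm (A v) \<le> r * norm v" "norm (B v) \<le> r * norm v" for v
    using onorm[OF bl(1), of v] onorm[OF bl(2), of v]
      mult_right_mono[of "onorm A" r "norm v"] mult_right_mono[of "onorm B" r "norm v"]
    by (simp_all add: r_def)
  have "\<sigma> * norm (a - b) * norm v \<le> norm (A v - B v)" for v
    using \<sigma>(2)[of "a - b" v] by (simp add: A_def B_def Umat_diff)
  then have "s * xcotx_form A (complex_vec x) + (1 - s) * xcotx_form B (complex_vec x)
      + s * (1 - s) / 2 * (\<sigma> * norm (a - b) * norm (complex_vec x) / (2 * pi))\<^sup>2
    \<le> xcotx_form (\<lambda>v. s *\<^sub>R A v + (1 - s) *\<^sub>R B v) (complex_vec x)"
    using \<sigma>(1) by (intro xcotx_form_strongly_concave[OF bl sa bound r s]) simp_all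
  with phi_convex_comb_diff[OF bound[unfolded A_def B_def] r s, of x t] show ?thesis
    unfolding A_def B_def by linarith
qed

theorem proposition9p1:
  fixes Us :: "'m::finite \<Rightarrow> real^'q::finite^'q"
    and x :: "real^'q" and t :: "real^'m"
  assumes skew: "\<And>j. transpose (Us j) = - Us j"
    and indep: "\<And>c::'m \<Rightarrow> real. (\<Sum>j\<in>UNIV. c j *\<^sub>R Us j) = 0 \<Longrightarrow> (\<forall>j. c j = 0)"
    and met: "metivier Us"
    and x_nz: "x \<noteq> 0"
  shows "\<exists>C>0. \<forall>s a b. 0 \<le> s \<and> s \<le> 1 \<and> a \<in> Omega_star Us \<and> b \<in> Omega_star Us \<longrightarrow>
           phi Us x t (s *\<^sub>R a + (1 - s) *\<^sub>R b)
             \<ge> s * phi Us x t a + (1 - s) * phi Us x t b + C * s * (1 - s) * (norm (a - b))\<^sup>2"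
proof -
  obtain \<sigma> where \<sigma>: "\<sigma> > 0" "\<And>h v. \<sigma> * norm h * norm v \<le> norm (Umat Us h *v (v :: complex^'q))"
    using metivier_lower_bound[OF met] by blast
  define C where "C = (\<sigma> * norm (complex_vec x) / (2 * pi))\<^sup>2 / 2"
  have "complex_vec x \<noteq> 0" using x_nz by (auto simp: complex_vec_def vec_eq_iff)
  then have "C > 0" using \<sigma>(1) by (simp add: C_def)
  moreover have "s * phi Us x t a + (1 - s) * phi Us x t b + C * s * (1 - s) * (norm (a - b))\<^sup>2
      \<le> phi Us x t (s *\<^sub>R a + (1 - s) *\<^sub>R b)"
    if "0 \<le> s" "s \<le> 1" "a \<in> Omega_star Us" "b \<in> Omega_star Us" for s a b
  proof -
    have "C * s * (1 - s) * (norm (a - b))\<^sup>2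
        = s * (1 - s) / 2 * (\<sigma> * norm (a - b) * norm (complex_vec x) / (2 * pi))\<^sup>2"
      by (simp add: C_def power_mult_distrib power_divide)
    then show ?thesis
      by (simp only:) (rule phi_strongly_concave[OF skew less_imp_le[OF \<sigma>(1)] \<sigma>(2) that(3,4,1,2)])
  qed
  ultimately show ?thesis by blast
qed

end
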